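(* Fix $\alpha\in(0,1]$. For any sequence of labels containing $n$ distinct labels and any regressor values in $[0,1]$ used in the decisions, the tree produced by the online tree construction below (which has $n$ leaves) has depth at most $\dfrac{\log n}{\log(1/\kappa)}+2$ (for $\alpha=1$, where $\kappa=1/2$, this reads $\log_2 n+2$).
   Context: For $p\in[0,1]$, positive integers $L,R$ and $\alpha\in(0,1]$, define $\mathrm{obj}(p,L,R,\alpha)=(1-\alpha)\,2\,(p-\tfrac12)+\alpha\log_2\frac{L}{R}$, and $\kappa=\dfrac{1}{1+2^{1-1/\alpha}}$ (so $\kappa\in[1/2,1)$). Online tree construction: the tree is a rooted binary tree in which every internal node has a left and a right child, and whose leaves correspond one-to-one to the distinct labels seen so far; it starts as a single leaf (the first label). When a label not yet in the tree arrives, it descends from the root: at each internal node, with $L,R$ the current numbers of leaves in its left and right subtrees and $p\in[0,1]$ an arbitrary value (the current regressor prediction at that node), it moves to the right child if $\mathrm{obj}(p,L,R,\alpha)>0$ and to the left child otherwise. On reaching a leaf (holding some label $y'$), that leaf becomes an internal node whose left child is a leaf with label $y'$ and whose right child is a new leaf with the new label. Labels already in the tree do not change its shape. The depth of the tree is the maximum number of edges on a root-to-leaf path. *)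

theory Defs
  imports Complex_Main
begin

definition obj :: "real \<Rightarrow> nat \<Rightarrow> nat \<Rightarrow> real \<Rightarrow> real" where
  "obj p L R \<alpha> = (1 - \<alpha>) * 2 * (p - 1/2) + \<alpha> * log 2 (real L / real R)"

definition kappa :: "real \<Rightarrow> real" where
  "kappa \<alpha> = 1 / (1 + 2 powr (1 - 1 / \<alpha>))"

datatype 'a ltree = Leaf 'a | Node "'a ltree" "'a ltree"

fun nleaves :: "'a ltree \<Rightarrow> nat" where
  "nleaves (Leaf _) = 1"
| "nleaves (Node l r) = nleaves l + nleaves r"

fun labels :: "'a ltree \<Rightarrow> 'a set" where
  "labels (Leaf y) = {y}"
| "labels (Node l r) = labels l \<union> labels r"

fun depth :: "'a ltree \<Rightarrow> nat" where
  "depth (Leaf _) = 0"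
| "depth (Node l r) = Suc (max (depth l) (depth r))"

text \<open>The regressor value used at an internal node is
  given by p applied to the path (False = left, True = right) from the root to
  that node; this is an arbitrary function, so arbitrary regressor values are allowed.\<close>
fun ins :: "real \<Rightarrow> (bool list \<Rightarrow> real) \<Rightarrow> bool list \<Rightarrow> 'a \<Rightarrow> 'a ltree \<Rightarrow> 'a ltree" where
  "ins \<alpha> p pth y (Leaf y') = Node (Leaf y') (Leaf y)"
| "ins \<alpha> p pth y (Node l r) =
     (if obj (p pth) (nleaves l) (nleaves r) \<alpha> > 0
      then Node l (ins \<alpha> p (pth @ [True]) y r)
      else Node (ins \<alpha> p (pth @ [False]) y l) r)"

definition step :: "real \<Rightarrow> (bool list \<Rightarrow> real) \<Rightarrow> 'a \<Rightarrow> 'a ltree \<Rightarrow> 'a ltree" where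
  "step \<alpha> p y t = (if y \<in> labels t then t else ins \<alpha> p [] y t)"

text \<open>Processing the remaining labels; ps i gives the regressor values used
  when the i-th subsequent label arrives.\<close>
fun build_aux :: "real \<Rightarrow> (nat \<Rightarrow> bool list \<Rightarrow> real) \<Rightarrow> nat \<Rightarrow> 'a list \<Rightarrow> 'a ltree \<Rightarrow> 'a ltree" where
  "build_aux \<alpha> ps i [] t = t"
| "build_aux \<alpha> ps i (y # ys) t = build_aux \<alpha> ps (Suc i) ys (step \<alpha> (ps i) y t)"

fun build :: "real \<Rightarrow> (nat \<Rightarrow> bool list \<Rightarrow> real) \<Rightarrow> 'a list \<Rightarrow> 'a ltree" where
  "build \<alpha> ps [] = undefined"
| "build \<alpha> ps (y # ys) = build_aux \<alpha> ps 0 ys (Leaf y)"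

end

theory Submission
  imports Defs
begin

(* Let s = 2 powr (1 - 1/\<alpha>), so that 1/kappa \<alpha> = 1 + s.  Since the
   regressor term (1-\<alpha>)*2*(p-1/2) lies in [-(1-\<alpha>), 1-\<alpha>], a new label is sent
   right only if s*R < L, and left only if s*L \<le> R.  Hence every tree produced
   is "s-balanced": at each internal node the subtrees satisfy s*(R-1) \<le> L and
   s*(L-1) \<le> R (the side that just grew was small enough before it grew).
   In an s-balanced tree the deeper subtree of the root has m leaves, the other
   at least s*(m-1), so (1+s)^(depth-1) \<le> #leaves - 1; taking logarithms gives
   depth \<le> ln n / ln (1+s) + 1.  The file establishes
     (1) structural facts about insertion,
     (2) the two consequences of the routing decision,
     (3) that insertion preserves s-balance,
     (4) the logarithmic depth bound for s-balanced trees,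
     (5) the invariant of the online construction (balanced, n leaves),
   and theorem3 combines (4) and (5) with 1/kappa \<alpha> = 1 + s. *)

lemma nleaves_pos: "nleaves t \<ge> 1"
  by (induction t) auto

lemma finite_labels: "finite (labels t)"
  by (induction t) auto

lemma nleaves_ins: "nleaves (ins \<alpha> p pth y t) = nleaves t + 1"
  by (induction t arbitrary: pth) auto

lemma labels_ins: "labels (ins \<alpha> p pth y t) = insert y (labels t)"
  by (induction t arbitrary: pth) auto

definition split_ratio :: "real \<Rightarrow> real" where
  "split_ratio \<alpha> = 2 powr (1 - 1 / \<alpha>)"

lemma split_ratio_pos: "split_ratio \<alpha> > 0"
  by (simp add: split_ratio_def)

lemma inverse_kappa: "1 / kappa \<alpha> = 1 + split_ratio \<alpha>"
  by (simp add: kappa_def split_ratio_def)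

text \<open>The regressor part of the objective is bounded by 1 - \<alpha> in absolute value,
  so the sign of the objective forces a bound on log2 (L/R).\<close>

lemma regressor_term_bound:
  fixes \<alpha> p :: real
  assumes "\<alpha> \<le> 1" "0 \<le> p" "p \<le> 1"
  shows "\<bar>(1 - \<alpha>) * 2 * (p - 1/2)\<bar> \<le> 1 - \<alpha>"
proof -
  have "\<bar>2 * (p - 1/2)\<bar> \<le> 1" using assms(2,3) by auto
  then have "(1 - \<alpha>) * \<bar>2 * (p - 1/2)\<bar> \<le> (1 - \<alpha>) * 1"
    using assms(1) by (intro mult_left_mono) auto
  moreover have "\<bar>(1 - \<alpha>) * 2 * (p - 1/2)\<bar> = (1 - \<alpha>) * \<bar>2 * (p - 1/2)\<bar>"
    using abs_of_nonneg[of "1 - \<alpha>"] assms(1) by (simp only: mult.assoc abs_mult)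
  ultimately show ?thesis by simp
qed

lemma obj_pos_right_small:
  assumes "0 < \<alpha>" "\<alpha> \<le> 1" "0 \<le> p" "p \<le> 1" "L \<ge> 1" "R \<ge> 1"
    and "obj p L R \<alpha> > 0"
  shows "split_ratio \<alpha> * real R < real L"
proof -
  have "\<alpha> * log 2 (real L / real R) > -(1 - \<alpha>)"
    using assms(7) regressor_term_bound[OF assms(2-4)] unfolding obj_def by linarith
  then have "1 - 1/\<alpha> < log 2 (real L / real R)"
    using assms(1) by (simp add: field_simps)
  then have "split_ratio \<alpha> < real L / real R"
    using assms(5,6) by (simp add: split_ratio_def less_log_iff)
  then show ?thesis using assms(6) by (simp add: field_simps)
qed

lemma obj_nonpos_left_small:
  assumes "0 < \<alpha>" "\<alpha> \<le> 1" "0 \<le> p" "p \<le> 1" "L \<ge> 1" "R \<ge> 1"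
    and "\<not> obj p L R \<alpha> > 0"
  shows "split_ratio \<alpha> * real L \<le> real R"
proof -
  have "\<alpha> * log 2 (real L / real R) \<le> 1 - \<alpha>"
    using assms(7) regressor_term_bound[OF assms(2-4)] unfolding obj_def by linarith
  then have "1 - 1/\<alpha> \<le> - log 2 (real L / real R)"
    using assms(1) by (simp add: field_simps)
  also have "- log 2 (real L / real R) = log 2 (real R / real L)"
    using assms(5,6) by (simp add: log_divide)
  finally have "split_ratio \<alpha> \<le> real R / real L"
    using assms(5,6) by (simp add: split_ratio_def le_log_iff)
  then show ?thesis using assms(5) by (simp add: field_simps)
qed

fun balanced :: "real \<Rightarrow> 'a ltree \<Rightarrow> bool" where
  "balanced s (Leaf _) = True"
| "balanced s (Node l r) \<longleftrightarrow> balanced s l \<and> balanced s r \<and>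
     s * (real (nleaves r) - 1) \<le> real (nleaves l) \<and>
     s * (real (nleaves l) - 1) \<le> real (nleaves r)"

text \<open>Insertion with regressor values in [0,1] preserves balance: the subtree that
  receives the new leaf was strictly (resp. weakly) smaller than 1/s times its sibling.\<close>

lemma balanced_ins:
  assumes "0 < \<alpha>" "\<alpha> \<le> 1" "\<And>pth. 0 \<le> p pth \<and> p pth \<le> 1"
    and "balanced (split_ratio \<alpha>) t"
  shows "balanced (split_ratio \<alpha>) (ins \<alpha> p pth y t)"
  using assms(4)
proof (induction t arbitrary: pth)
  case (Leaf x)
  then show ?case by simp
next
  case (Node l r)
  have s: "split_ratio \<alpha> > 0" by (rule split_ratio_pos)
  note decide = assms(1,2) conjunct1[OF assms(3)] conjunct2[OF assms(3)] nleaves_pos nleaves_pos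
  show ?case
  proof (cases "obj (p pth) (nleaves l) (nleaves r) \<alpha> > 0")
    case True
    have "split_ratio \<alpha> * real (nleaves r) < real (nleaves l)"
      using obj_pos_right_small[OF decide True] .
    with True Node s show ?thesis by (simp add: nleaves_ins algebra_simps)
  next
    case False
    have "split_ratio \<alpha> * real (nleaves l) \<le> real (nleaves r)"
      using obj_nonpos_left_small[OF decide False] .
    with False Node s show ?thesis by (simp add: nleaves_ins algebra_simps)
  qed
qed

lemma balanced_leaves_growth:
  assumes "s > 0" "balanced s t" "depth t \<ge> 1"
  shows "(1 + s) ^ (depth t - 1) \<le> real (nleaves t) - 1"
  using assms(2,3)
proof (induction t)
  case (Leaf x)
  then show ?case by simp
next
  case (Node l r)
  have deeper_child: "(1 + s) ^ (depth (Node l r) - 1) \<le> real (nleaves (Node l r)) - 1"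
    if sibling: "s * (real (nleaves m) - 1) \<le> real (nleaves k)"
      and d: "depth (Node l r) = Suc (depth m)"
      and n: "nleaves (Node l r) = nleaves m + nleaves k"
      and IH: "depth m \<ge> 1 \<Longrightarrow> (1 + s) ^ (depth m - 1) \<le> real (nleaves m) - 1"
    for m k :: "'a ltree"
  proof (cases "depth m")
    case 0
    then show ?thesis using d n nleaves_pos[of m] nleaves_pos[of k] by simp
  next
    case (Suc e)
    have "(1 + s) ^ (depth (Node l r) - 1) = (1 + s) * (1 + s) ^ (depth m - 1)"
      using d Suc by simp
    also have "\<dots> \<le> (1 + s) * (real (nleaves m) - 1)"
      using IH Suc assms(1) by (intro mult_left_mono) auto
    also have "\<dots> \<le> real (nleaves (Node l r)) - 1"
      using n sibling by (simp add: algebra_simps)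
    finally show ?thesis .
  qed
  show ?case
  proof (cases "depth l \<le> depth r")
    case True
    with Node show ?thesis by (intro deeper_child[of r l]) (auto simp: max_def)
  next
    case False
    with Node show ?thesis by (intro deeper_child[of l r]) (auto simp: max_def)
  qed
qed

lemma balanced_depth_bound:
  assumes "s > 0" "balanced s t"
  shows "real (depth t) \<le> ln (real (nleaves t)) / ln (1 + s) + 1"
proof (cases "depth t = 0")
  case True
  have "ln (real (nleaves t)) \<ge> 0" using nleaves_pos[of t] by simp
  moreover have "ln (1 + s) > 0" using assms(1) by simp
  ultimately show ?thesis using True by simp
next
  case False
  have pos: "(0::real) < (1 + s) ^ (depth t - 1)" using assms(1) by simp
  have "(1 + s) ^ (depth t - 1) \<le> real (nleaves t)"
    using balanced_leaves_growth[OF assms] False by linarith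
  then have "ln ((1 + s) ^ (depth t - 1)) \<le> ln (real (nleaves t))"
    using pos by (subst ln_le_cancel_iff) auto
  then have "real (depth t - 1) * ln (1 + s) \<le> ln (real (nleaves t))"
    using assms(1) by (simp add: ln_realpow)
  then have "real (depth t - 1) \<le> ln (real (nleaves t)) / ln (1 + s)"
    using assms(1) by (simp add: field_simps)
  then show ?thesis using False by simp
qed

lemma build_aux_invariant:
  assumes "0 < \<alpha>" "\<alpha> \<le> 1" "\<And>i pth. 0 \<le> ps i pth \<and> ps i pth \<le> 1"
    and "balanced (split_ratio \<alpha>) t" "nleaves t = card (labels t)"
  shows "balanced (split_ratio \<alpha>) (build_aux \<alpha> ps i ys t) \<and>
    nleaves (build_aux \<alpha> ps i ys t) = card (labels (build_aux \<alpha> ps i ys t)) \<and>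
    labels (build_aux \<alpha> ps i ys t) = labels t \<union> set ys"
  using assms(4,5)
proof (induction ys arbitrary: i t)
  case Nil
  then show ?case by simp
next
  case (Cons y ys)
  let ?t = "step \<alpha> (ps i) y t"
  have "balanced (split_ratio \<alpha>) ?t"
    using Cons.prems balanced_ins[OF assms(1,2) assms(3)] unfolding step_def by auto
  moreover have "nleaves ?t = card (labels ?t)"
    using Cons.prems finite_labels[of t] unfolding step_def
    by (auto simp: nleaves_ins labels_ins)
  moreover have "labels ?t = insert y (labels t)"
    unfolding step_def by (auto simp: labels_ins)
  ultimately show ?case using Cons.IH[of ?t "Suc i"] by auto
qed

lemma build_invariant:
  assumes "0 < \<alpha>" "\<alpha> \<le> 1" "\<And>i pth. 0 \<le> ps i pth \<and> ps i pth \<le> 1" "ys \<noteq> []"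
  shows "balanced (split_ratio \<alpha>) (build \<alpha> ps ys) \<and>
    nleaves (build \<alpha> ps ys) = card (set ys)"
proof -
  obtain y zs where ys: "ys = y # zs" using assms(4) by (cases ys) auto
  show ?thesis
    using build_aux_invariant[OF assms(1-3), where t = "Leaf y" and i = 0 and ys = zs] ys by auto
qed

theorem theorem3:
  fixes \<alpha> :: real and ys :: "'a list" and ps :: "nat \<Rightarrow> bool list \<Rightarrow> real"
  assumes "0 < \<alpha>" and "\<alpha> \<le> 1"
    and "ys \<noteq> []"
    and "\<And>i pth. 0 \<le> ps i pth \<and> ps i pth \<le> 1"
  shows "real (depth (build \<alpha> ps ys))
           \<le> ln (real (card (set ys))) / ln (1 / kappa \<alpha>) + 2"
proof -
  let ?t = "build \<alpha> ps ys"
  have inv: "balanced (split_ratio \<alpha>) ?t" "nleaves ?t = card (set ys)"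
    using build_invariant[OF assms(1,2,4,3)] by auto
  have "real (depth ?t) \<le> ln (real (nleaves ?t)) / ln (1 + split_ratio \<alpha>) + 1"
    using balanced_depth_bound[OF split_ratio_pos inv(1)] .
  then show ?thesis using inv(2) by (simp add: inverse_kappa)
qed

end
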